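(* Let $t$ be odd and $k=(t+1)/2$. For all $n\ge0$ and $m>nt$, $\mathcal{L}^{(t)}_L\big(L^{(t)}_m(x)L^{(t)}_n(x)\big)=0$, and \[ \mathcal{L}^{(t)}_L\big(L^{(t)}_{nt}(x)L^{(t)}_n(x)\big)=\prod_{i=0}^{n-1}\Big(\binom{(n-i)t}{t}\binom{t}{k}(k!)^2\Big)^2 . \]
   Context: Let $t\ge1$ be odd and $k=(t+1)/2$. In $K_{n,n}$, a $t$-path is a subgraph isomorphic to a path with $t$ edges. $L^{(t)}_n$ is the polynomial with $L^{(t)}_n(x^2)=\sum_F(-1)^{|F|}x^{\,2n-(t+1)|F|}$, the sum over all families $F$ of pairwise vertex-disjoint $t$-paths in $K_{n,n}$. Let $\mu^{(t)}_n$ be the number of coverings of all vertices of $K_{n,n}$ by pairwise vertex-disjoint $t$-paths ($\mu^{(t)}_0=1$), and let $\mathcal{L}^{(t)}_L$ be the linear functional with $\mathcal{L}^{(t)}_L(x^n)=\mu^{(t)}_n$. *)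

theory Defs
  imports "HOL-Computational_Algebra.Polynomial"
begin

text \<open>Vertices of K_{n,n}: Inl i (left part) and Inr j (right part), i, j < n.
  Edges are two-element vertex sets; a subgraph isomorphic to a path is identified
  with its edge set.\<close>

definition Kverts :: "nat \<Rightarrow> (nat + nat) set" where
  "Kverts n = Inl ` {..<n} \<union> Inr ` {..<n}"

definition Kadj :: "nat \<Rightarrow> nat + nat \<Rightarrow> nat + nat \<Rightarrow> bool" where
  "Kadj n u v = (\<exists>i<n. \<exists>j<n. (u = Inl i \<and> v = Inr j) \<or> (u = Inr j \<and> v = Inl i))"

definition tpaths :: "nat \<Rightarrow> nat \<Rightarrow> (nat + nat) set set set" where
  "tpaths t n = {P. \<exists>vs. length vs = Suc t \<and> distinct vs \<and>
      (\<forall>i<t. Kadj n (vs ! i) (vs ! Suc i)) \<and>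
      P = {{vs ! i, vs ! Suc i} | i. i < t}}"

definition pverts :: "(nat + nat) set set \<Rightarrow> (nat + nat) set" where
  "pverts P = \<Union>P"

definition tfamilies :: "nat \<Rightarrow> nat \<Rightarrow> (nat + nat) set set set set" where
  "tfamilies t n = {F. F \<subseteq> tpaths t n \<and>
      (\<forall>P\<in>F. \<forall>Q\<in>F. P \<noteq> Q \<longrightarrow> pverts P \<inter> pverts Q = {})}"

text \<open>L_n^{(t)}(y), where L_n^{(t)}(x^2) = sum_F (-1)^|F| x^(2n-(t+1)|F|),
  i.e. L_n^{(t)}(y) = sum_F (-1)^|F| y^(n - k|F|) with k = (t+1)/2.\<close>
definition Lpoly :: "nat \<Rightarrow> nat \<Rightarrow> int poly" where
  "Lpoly t n = (\<Sum>F\<in>tfamilies t n. (-1) ^ card F * [:0, 1:] ^ (n - ((t + 1) div 2) * card F))"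

definition mu :: "nat \<Rightarrow> nat \<Rightarrow> nat" where
  "mu t n = card {F \<in> tfamilies t n. (\<Union>P\<in>F. pverts P) = Kverts n}"

definition LL :: "nat \<Rightarrow> int poly \<Rightarrow> int" where
  "LL t p = (\<Sum>i\<le>degree p. coeff p i * int (mu t i))"

end

theory Submission
  imports Defs
begin

(* Let t = 2k - 1.  A t-path of K_{n,n} alternates between the two sides and has k vertices
   on each.  Traversed from its left endpoint it is the same as a pair of lists of k distinct
   left and k distinct right indices, and this encoding is injective.  Hence the t-paths
   avoiding a vertex set with a free left and b free right vertices number (a)_k (b)_k (falling
   factorials), and double counting pairs (family, marked path of it) shows that the number
   f_j(n) of families of j disjoint t-paths satisfies  j! f_j(n) = ((n)_{kj})^2.  In particular
   mu_N = (N!)^2 / (N/k)!  if k divides N, and mu_N = 0 otherwise.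

   Since L_m = sum_j (-1)^j f_j(m) x^(m - kj), the functional on x^r L_m, multiplied by N! with
   kN = r + m, is the N-th finite difference  (m!)^2 sum_j (-1)^j C(N,j) p(j)  of the polynomial
   p(x) = prod_{s<r} (m + s + 1 - kx)^2 of degree 2r.  The N-th difference of a polynomial of
   degree at most N is (-1)^N N! times its N-th coefficient, so this value is 0 for rt < m and
   (m!)^2 k^(2r) for m = rt.  Expanding the factor L_n of L_m L_n into the monomials x^(n - kj)
   then gives both statements of the theorem. *)

section \<open>Edges of a walk given by its vertex list\<close>

fun walk_edges :: "'a list \<Rightarrow> 'a set set" where
  "walk_edges (a # b # xs) = insert {a, b} (walk_edges (b # xs))"
| "walk_edges _ = {}"

lemma walk_edges_conv_nth: "walk_edges vs = {{vs ! i, vs ! Suc i} | i. Suc i < length vs}"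
proof (induction vs rule: walk_edges.induct)
  case (1 a b xs)
  have "{{(a # b # xs) ! i, (a # b # xs) ! Suc i} | i. Suc i < length (a # b # xs)}
      = insert {a, b} {{(b # xs) ! i, (b # xs) ! Suc i} | i. Suc i < length (b # xs)}"
    by (auto simp: less_Suc_eq_0_disj) (metis nth_Cons_0 nth_Cons_Suc length_Cons Suc_less_eq)+
  then show ?case using 1 by simp
qed simp_all

lemma walk_edges_subset: "e \<in> walk_edges vs \<Longrightarrow> e \<subseteq> set vs"
  by (induction vs rule: walk_edges.induct) auto

lemma Union_walk_edges: "Suc 0 < length vs \<Longrightarrow> \<Union>(walk_edges vs) = set vs"
proof (induction vs rule: walk_edges.induct)
  case (1 a b xs)
  then show ?case by (cases xs) auto
qed auto

lemma walk_edges_snoc: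
  "walk_edges (xs @ [y]) = (if xs = [] then {} else insert {last xs, y} (walk_edges xs))"
  by (induction xs rule: walk_edges.induct) auto

lemma walk_edges_rev: "walk_edges (rev vs) = walk_edges vs"
proof (induction vs)
  case (Cons a xs)
  have "walk_edges (rev (a # xs)) = (if xs = [] then {} else insert {hd xs, a} (walk_edges xs))"
    using Cons by (simp add: walk_edges_snoc last_rev)
  then show ?case by (cases xs) (simp_all add: insert_commute)
qed simp

lemma walk_edges_at_start:
  assumes "distinct (a # b # xs)"
  shows "{e \<in> walk_edges (a # b # xs). a \<in> e} = {{a, b}}"
  using assms walk_edges_subset[of _ "b # xs"] by auto

lemma walk_edges_inner_vertex:
  assumes "distinct vs" "x \<in> set vs" "x \<noteq> hd vs" "x \<noteq> last vs"
  shows "\<exists>e1\<in>walk_edges vs. \<exists>e2\<in>walk_edges vs. e1 \<noteq> e2 \<and> x \<in> e1 \<and> x \<in> e2"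
  using assms
proof (induction vs rule: walk_edges.induct)
  case (1 a b xs)
  show ?case
  proof (cases "x = b")
    case True
    with 1 obtain c ys where xs: "xs = c # ys" by (cases xs) auto
    have "{a, b} \<noteq> {b, c}" using 1(2) xs by (auto simp: doubleton_eq_iff)
    then show ?thesis using True xs by auto
  next
    case False
    with 1 show ?thesis by fastforce
  qed
qed auto

lemma walk_edges_determine_path:
  assumes "distinct vs" "distinct ws" "walk_edges vs = walk_edges ws" "vs \<noteq> []" "ws \<noteq> []"
    and "hd vs = hd ws"
  shows "vs = ws"
  using assms
proof (induction vs arbitrary: ws rule: walk_edges.induct)
  case (1 a b xs)
  then obtain c ys where ws: "ws = a # c # ys"
    by (cases ws rule: walk_edges.cases) auto
  have "{{a, b}} = {e \<in> walk_edges ws. a \<in> e}"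
    using walk_edges_at_start[OF 1(2)] 1(4) by (simp only:)
  also have "\<dots> = {{a, c}}" using walk_edges_at_start[of a c ys] 1(3) ws by (simp only:)
  finally have "{a, b} = {a, c}" by simp
  then have bc: "b = c" using 1(2) by (auto simp: doubleton_eq_iff)
  have "{a, b} \<notin> walk_edges (b # xs)" using walk_edges_subset[of "{a, b}" "b # xs"] 1(2) by auto
  moreover have "{a, c} \<notin> walk_edges (c # ys)"
    using walk_edges_subset[of "{a, c}" "c # ys"] 1(3) ws by auto
  ultimately have "walk_edges (b # xs) = walk_edges (c # ys)" using 1(4) ws bc
    by (metis Diff_insert_absorb walk_edges.simps(1))
  then have "b # xs = c # ys" using 1 ws bc by (intro 1(1)) auto
  then show ?case using ws by simp
next
  case ("2_2" v)
  then show ?case by (cases ws rule: walk_edges.cases) auto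
qed simp

fun alternate :: "nat list \<Rightarrow> nat list \<Rightarrow> (nat + nat) list" where
  "alternate (a # as) (b # bs) = Inl a # Inr b # alternate as bs"
| "alternate _ _ = []"

lemma length_alternate: "length ls = length rs \<Longrightarrow> length (alternate ls rs) = 2 * length ls"
  by (induction ls rs rule: alternate.induct) auto

lemma set_alternate:
  "length ls = length rs \<Longrightarrow> set (alternate ls rs) = Inl ` set ls \<union> Inr ` set rs"
  by (induction ls rs rule: alternate.induct) auto

lemma distinct_alternate:
  "length ls = length rs \<Longrightarrow> distinct (alternate ls rs) \<longleftrightarrow> distinct ls \<and> distinct rs"
  by (induction ls rs rule: alternate.induct) (auto simp: set_alternate)

lemma alternate_inject:
  "length ls = length rs \<Longrightarrow> length ls' = length rs' \<Longrightarrow> alternate ls rs = alternate ls' rs'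
   \<Longrightarrow> ls = ls' \<and> rs = rs'"
proof (induction ls rs arbitrary: ls' rs' rule: alternate.induct)
  case (1 a as b bs)
  then show ?case by (cases "(ls', rs')" rule: alternate.cases) auto
next
  case ("2_1" v)
  then show ?case by (cases "(ls', rs')" rule: alternate.cases) auto
next
  case ("2_2" v)
  then show ?case by (cases "(ls', rs')" rule: alternate.cases) auto
qed

lemma last_alternate:
  "ls \<noteq> [] \<Longrightarrow> length ls = length rs \<Longrightarrow> last (alternate ls rs) = Inr (last rs)"
proof (induction ls rs rule: alternate.induct)
  case (1 a as b bs)
  then show ?case by (cases as; cases bs) auto
qed auto

lemma Kadj_sides: "Kadj n u v \<Longrightarrow> isl u \<noteq> isl v"
  by (auto simp: Kadj_def)

lemma Kadj_sym: "Kadj n u v = Kadj n v u"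
  by (auto simp: Kadj_def)

lemma Kadj_Inl_Inr [simp]: "Kadj n (Inl a) (Inr b) \<longleftrightarrow> a < n \<and> b < n"
  and Kadj_Inr_Inl [simp]: "Kadj n (Inr b) (Inl a) \<longleftrightarrow> a < n \<and> b < n"
  by (auto simp: Kadj_def)

lemma alternate_walk:
  "length ls = length rs \<Longrightarrow> set ls \<subseteq> {..<n} \<Longrightarrow> set rs \<subseteq> {..<n}
   \<Longrightarrow> successively (Kadj n) (alternate ls rs)"
proof (induction ls rs rule: alternate.induct)
  case (1 a as b bs)
  then show ?case by (cases "(as, bs)" rule: alternate.cases) auto
qed auto

lemma walk_is_alternate:
  "successively (Kadj n) vs \<Longrightarrow> even (length vs) \<Longrightarrow> (vs \<noteq> [] \<Longrightarrow> isl (hd vs)) \<Longrightarrow>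
   \<exists>ls rs. vs = alternate ls rs \<and> length ls = length rs \<and> set ls \<subseteq> {..<n} \<and> set rs \<subseteq> {..<n}"
proof (induction vs rule: induct_list012)
  case (3 a b xs)
  have ab: "Kadj n a b" and walk: "successively (Kadj n) (b # xs)" using 3(3) by auto
  obtain x where a: "a = Inl x" using 3(5) by (cases a) auto
  obtain y where b: "b = Inr y" using ab a by (cases b) (auto simp: Kadj_def)
  have "isl (hd xs)" if "xs \<noteq> []"
    using walk that b Kadj_sides by (cases xs) fastforce+
  moreover have "successively (Kadj n) xs" using walk by (cases xs) auto
  ultimately obtain ls rs where "xs = alternate ls rs" "length ls = length rs"
    "set ls \<subseteq> {..<n}" "set rs \<subseteq> {..<n}" using 3(1,4) by auto
  then show ?case using a b ab
    by (intro exI[of _ "x # ls"] exI[of _ "y # rs"]) auto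
qed (auto intro: exI[of _ "[]"])

lemma walk_ends_opposite:
  "successively (Kadj n) vs \<Longrightarrow> even (length vs) \<Longrightarrow> vs \<noteq> [] \<Longrightarrow> isl (last vs) = (\<not> isl (hd vs))"
proof (induction vs rule: induct_list012)
  case (3 a b xs)
  show ?case
  proof (cases xs)
    case (Cons c ys)
    then show ?thesis using 3 Kadj_sides by fastforce
  qed (use 3 Kadj_sides in auto)
qed auto

section \<open>Encoding t-paths by pairs of index lists\<close>

definition side_lists :: "nat \<Rightarrow> nat \<Rightarrow> (nat list \<times> nat list) set" where
  "side_lists n k = {(ls, rs). length ls = k \<and> length rs = k \<and> distinct ls \<and> distinct rs \<and>
                              set ls \<subseteq> {..<n} \<and> set rs \<subseteq> {..<n}}"

definition path_of :: "nat list \<times> nat list \<Rightarrow> (nat + nat) set set" where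
  "path_of p = walk_edges (alternate (fst p) (snd p))"

lemma tpaths_conv_walks:
  "tpaths t n = {P. \<exists>vs. length vs = Suc t \<and> distinct vs \<and>
                         successively (Kadj n) vs \<and> P = walk_edges vs}"
proof -
  have "(length vs = Suc t \<and> distinct vs \<and> (\<forall>i<t. Kadj n (vs ! i) (vs ! Suc i)) \<and>
          P = {{vs ! i, vs ! Suc i} | i. i < t}) \<longleftrightarrow>
        (length vs = Suc t \<and> distinct vs \<and> successively (Kadj n) vs \<and> P = walk_edges vs)"
    for vs and P :: "(nat + nat) set set"
    by (auto simp: walk_edges_conv_nth successively_conv_nth)
  then show ?thesis unfolding tpaths_def by simp
qed

text \<open>Every t-path, t = 2k - 1, can be traversed from its left endpoint, hence is encoded.\<close>
lemma tpaths_eq_image: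
  assumes "Suc t = 2 * k"
  shows "tpaths t n = path_of ` side_lists n k"
proof
  show "path_of ` side_lists n k \<subseteq> tpaths t n"
  proof
    fix P assume "P \<in> path_of ` side_lists n k"
    then obtain ls rs where "(ls, rs) \<in> side_lists n k" "P = path_of (ls, rs)" by auto
    then show "P \<in> tpaths t n"
      using assms unfolding tpaths_conv_walks path_of_def side_lists_def
      by (intro CollectI exI[of _ "alternate ls rs"])
        (auto simp: length_alternate distinct_alternate alternate_walk)
  qed
next
  show "tpaths t n \<subseteq> path_of ` side_lists n k"
  proof
    fix P assume "P \<in> tpaths t n"
    then obtain vs where vs: "length vs = Suc t" "distinct vs" "successively (Kadj n) vs"
      "P = walk_edges vs" unfolding tpaths_conv_walks by blast
    have ev: "even (length vs)" and ne: "vs \<noteq> []" using vs(1) assms by auto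
    obtain ws where ws: "length ws = Suc t" "distinct ws" "successively (Kadj n) ws"
      "P = walk_edges ws" "isl (hd ws)"
    proof (cases "isl (hd vs)")
      case False
      then have "isl (hd (rev vs))" using walk_ends_opposite[OF vs(3) ev ne] ne by (simp add: hd_rev)
      moreover have "successively (Kadj n) (rev vs)" using vs(3) Kadj_sym by simp
      ultimately show ?thesis using vs that[of "rev vs"] by (simp add: walk_edges_rev)
    qed (use vs that in blast)
    obtain ls rs where lr: "ws = alternate ls rs" "length ls = length rs"
      "set ls \<subseteq> {..<n}" "set rs \<subseteq> {..<n}"
      using walk_is_alternate[OF ws(3)] ws(1,5) vs(1) ev by auto
    have "(ls, rs) \<in> side_lists n k"
      using lr ws assms by (auto simp: side_lists_def distinct_alternate length_alternate)
    moreover have "P = path_of (ls, rs)" using lr ws by (simp add: path_of_def)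
    ultimately show "P \<in> path_of ` side_lists n k" by blast
  qed
qed

lemma pverts_path_of:
  assumes "(ls, rs) \<in> side_lists n k" "k \<ge> 1"
  shows "pverts (path_of (ls, rs)) = Inl ` set ls \<union> Inr ` set rs"
  using assms unfolding pverts_def path_of_def side_lists_def
  by (subst Union_walk_edges) (auto simp: length_alternate set_alternate)

text \<open>The encoding is injective: the first vertex of the encoded walk is the left vertex lying on
  a single edge, and a path is determined by its edges and its first vertex.\<close>
lemma inj_on_path_of:
  assumes "k \<ge> 1"
  shows "inj_on path_of (side_lists n k)"
proof (rule inj_onI)
  fix p q assume p: "p \<in> side_lists n k" and q: "q \<in> side_lists n k"
    and eq: "path_of p = path_of q"
  obtain ls rs ls' rs' where pq: "p = (ls, rs)" "q = (ls', rs')" by fastforce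
  define vs where "vs = alternate ls rs"
  have len: "length ls = k" "length rs = k" "length ls' = k" "length rs' = k"
    using p q pq by (auto simp: side_lists_def)
  then obtain a as' b bs' where ls': "ls' = a # as'" and rs': "rs' = b # bs'"
    using assms by (cases ls'; cases rs') auto
  define ws where "ws = alternate ls' rs'"
  have ws: "ws = Inl a # Inr b # alternate as' bs'" by (simp add: ws_def ls' rs')
  have dist: "distinct vs" "distinct ws" using p q pq len
    by (auto simp: side_lists_def vs_def ws_def distinct_alternate)
  have edges: "walk_edges vs = walk_edges ws"
    using eq pq by (simp add: path_of_def vs_def ws_def)
  have start: "{e \<in> walk_edges vs. Inl a \<in> e} = {{Inl a, Inr b}}"
    unfolding edges ws by (rule walk_edges_at_start) (use dist ws in simp)
  have ne: "vs \<noteq> []" using len assms by (cases ls; cases rs) (auto simp: vs_def)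
  have "hd vs = Inl a"
  proof (rule ccontr)
    assume nh: "hd vs \<noteq> Inl a"
    have "Inl a \<in> set vs" using start walk_edges_subset by blast
    moreover have "last vs \<noteq> Inl a"
    proof -
      have "ls \<noteq> []" using len assms by auto
      then show ?thesis using len by (simp add: vs_def last_alternate)
    qed
    ultimately have "\<exists>e1\<in>walk_edges vs. \<exists>e2\<in>walk_edges vs. e1 \<noteq> e2 \<and> Inl a \<in> e1 \<and> Inl a \<in> e2"
      using walk_edges_inner_vertex[OF dist(1), of "Inl a"] nh by (simp add: eq_commute)
    then obtain e1 e2 where "e1 \<noteq> e2"
      "e1 \<in> {e \<in> walk_edges vs. Inl a \<in> e}" "e2 \<in> {e \<in> walk_edges vs. Inl a \<in> e}"
      by blast
    then show False unfolding start by simp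
  qed
  then have "vs = ws" using walk_edges_determine_path[OF dist edges ne] by (simp add: ws)
  then have "alternate ls rs = alternate ls' rs'" by (simp add: vs_def ws_def)
  then show "p = q" using alternate_inject[of ls rs ls' rs'] len pq by simp
qed

definition falling :: "nat \<Rightarrow> nat \<Rightarrow> nat" where
  "falling n r = (\<Prod>i<r. n - i)"

lemma falling_0 [simp]: "falling n 0 = 1"
  by (simp add: falling_def)

lemma falling_Suc: "falling n (Suc r) = falling n r * (n - r)"
  by (simp add: falling_def)

lemma falling_eq_0: "n < r \<Longrightarrow> falling n r = 0"
  unfolding falling_def by (rule prod_zero) auto

lemma falling_add: "falling n (a + b) = falling n a * falling (n - a) b"
  by (induction b) (simp_all add: falling_Suc diff_diff_add)

lemma falling_mult_fact: "r \<le> n \<Longrightarrow> falling n r * fact (n - r) = fact n"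
proof (induction r)
  case (Suc r)
  have "n - r = Suc (n - Suc r)" using Suc.prems by simp
  then have "fact (n - r) = (n - r) * fact (n - Suc r)" by simp
  then show ?case using Suc by (simp add: falling_Suc)
qed simp

lemma falling_self: "falling n n = fact n"
  using falling_mult_fact[of n n] by simp

lemma prod_interval_falling: "r \<le> n \<Longrightarrow> \<Prod>{n - r + 1..n} = falling n r"
proof (induction r)
  case (Suc r)
  have "{n - Suc r + 1..n} = insert (n - r) {n - r + 1..n}" using Suc.prems by auto
  then show ?case using Suc by (simp add: falling_Suc mult.commute)
qed simp

lemma card_distinct_lists:
  assumes "finite A"
  shows "card {xs. length xs = r \<and> distinct xs \<and> set xs \<subseteq> A} = falling (card A) r"
proof (cases "r \<le> card A")
  case True
  then show ?thesis using card_lists_distinct_length_eq[OF assms True] prod_interval_falling by simp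
next
  case False
  have "length xs \<le> card A" if "distinct xs" "set xs \<subseteq> A" for xs
    using that card_mono[OF assms] distinct_card by metis
  then have empty: "{xs. length xs = r \<and> distinct xs \<and> set xs \<subseteq> A} = {}" using False by auto
  show ?thesis unfolding empty using falling_eq_0[of "card A" r] False by simp
qed

lemma finite_side_lists: "finite (side_lists n k)"
proof -
  let ?L = "{xs. set xs \<subseteq> {..<n} \<and> length xs = k}"
  have "side_lists n k \<subseteq> ?L \<times> ?L" by (auto simp: side_lists_def)
  moreover have "finite (?L \<times> ?L)" using finite_lists_length_eq[of "{..<n}" k] by simp
  ultimately show ?thesis by (rule finite_subset)
qed

lemma card_side_lists_within:
  assumes "A \<subseteq> {..<n}" "B \<subseteq> {..<n}"
  shows "card {p \<in> side_lists n k. set (fst p) \<subseteq> A \<and> set (snd p) \<subseteq> B}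
         = falling (card A) k * falling (card B) k"
proof -
  have fin: "finite A" "finite B" using assms finite_subset by auto
  have "{p \<in> side_lists n k. set (fst p) \<subseteq> A \<and> set (snd p) \<subseteq> B} =
        {xs. length xs = k \<and> distinct xs \<and> set xs \<subseteq> A} \<times>
        {xs. length xs = k \<and> distinct xs \<and> set xs \<subseteq> B}"
    using assms by (auto simp: side_lists_def)
  then show ?thesis by (simp add: card_cartesian_product card_distinct_lists[OF fin(1)]
                                  card_distinct_lists[OF fin(2)])
qed

section \<open>Counting t-paths and families of disjoint t-paths\<close>

locale odd_path_length =
  fixes t k :: nat
  assumes t_eq: "Suc t = 2 * k"
begin

lemma k_pos: "k \<ge> 1"
  using t_eq by simp

lemma finite_tpaths: "finite (tpaths t n)"
  using tpaths_eq_image[OF t_eq] finite_side_lists by simp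

lemma finite_tfamilies: "finite (tfamilies t n)"
proof -
  have "tfamilies t n \<subseteq> Pow (tpaths t n)" by (auto simp: tfamilies_def)
  then show ?thesis using finite_tpaths finite_subset by blast
qed

lemma finite_family: "F \<in> tfamilies t n \<Longrightarrow> finite F"
  using finite_tpaths finite_subset by (auto simp: tfamilies_def)

lemma tpath_vertex_lists:
  assumes "P \<in> tpaths t n"
  obtains ls rs where "(ls, rs) \<in> side_lists n k" "pverts P = Inl ` set ls \<union> Inr ` set rs"
  using assms tpaths_eq_image[OF t_eq] pverts_path_of[OF _ k_pos] by auto

lemma tpath_side:
  assumes "P \<in> tpaths t n" "f = Inl \<or> f = Inr"
  shows "card {i. f i \<in> pverts P} = k" "{i. f i \<in> pverts P} \<subseteq> {..<n}"
proof -
  obtain ls rs where p: "(ls, rs) \<in> side_lists n k" "pverts P = Inl ` set ls \<union> Inr ` set rs"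
    using tpath_vertex_lists[OF assms(1)] .
  then have "{i. f i \<in> pverts P} = set ls \<or> {i. f i \<in> pverts P} = set rs" using assms(2) by auto
  moreover have "card (set ls) = k" "card (set rs) = k" "set ls \<subseteq> {..<n}" "set rs \<subseteq> {..<n}"
    using p(1) distinct_card[of ls] distinct_card[of rs] by (auto simp: side_lists_def)
  ultimately show "card {i. f i \<in> pverts P} = k" "{i. f i \<in> pverts P} \<subseteq> {..<n}" by auto
qed

lemma tpath_vertices:
  assumes "P \<in> tpaths t n"
  shows "pverts P \<subseteq> Kverts n" "pverts P \<noteq> {}"
proof -
  obtain ls rs where p: "(ls, rs) \<in> side_lists n k" "pverts P = Inl ` set ls \<union> Inr ` set rs"
    using tpath_vertex_lists[OF assms] .
  then show "pverts P \<subseteq> Kverts n" by (auto simp: side_lists_def Kverts_def)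
  show "pverts P \<noteq> {}" using p k_pos by (auto simp: side_lists_def)
qed

definition covered :: "(nat + nat) set set set \<Rightarrow> (nat + nat) set" where
  "covered F = (\<Union>P\<in>F. pverts P)"

lemma family_side:
  assumes "F \<in> tfamilies t n" "f = Inl \<or> f = Inr"
  shows "card {i. f i \<in> covered F} = k * card F" "{i. f i \<in> covered F} \<subseteq> {..<n}"
proof -
  have sub: "F \<subseteq> tpaths t n" and disj: "\<forall>P\<in>F. \<forall>Q\<in>F. P \<noteq> Q \<longrightarrow> pverts P \<inter> pverts Q = {}"
    using assms(1) by (auto simp: tfamilies_def)
  have eq: "{i. f i \<in> covered F} = (\<Union>P\<in>F. {i. f i \<in> pverts P})" by (auto simp: covered_def)
  have "card (\<Union>P\<in>F. {i. f i \<in> pverts P}) = (\<Sum>P\<in>F. card {i. f i \<in> pverts P})"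
  proof (rule card_UN_disjoint[OF finite_family[OF assms(1)]])
    show "\<forall>P\<in>F. finite {i. f i \<in> pverts P}"
      using tpath_side(2)[OF _ assms(2)] sub finite_subset by blast
    show "\<forall>P\<in>F. \<forall>Q\<in>F. P \<noteq> Q \<longrightarrow> {i. f i \<in> pverts P} \<inter> {i. f i \<in> pverts Q} = {}"
      using disj by blast
  qed
  also have "\<dots> = (\<Sum>P\<in>F. k)" using tpath_side(1)[OF _ assms(2)] sub by (intro sum.cong) auto
  finally show "card {i. f i \<in> covered F} = k * card F" unfolding eq by simp
  show "{i. f i \<in> covered F} \<subseteq> {..<n}"
    unfolding eq using tpath_side(2)[OF _ assms(2)] sub by blast
qed

lemma family_vertices: "F \<in> tfamilies t n \<Longrightarrow> covered F \<subseteq> Kverts n"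
  using tpath_vertices(1) by (fastforce simp: tfamilies_def covered_def)

definition avoiding :: "nat \<Rightarrow> (nat + nat) set \<Rightarrow> (nat + nat) set set set" where
  "avoiding n W = {P \<in> tpaths t n. pverts P \<inter> W = {}}"

text \<open>Via the encoding, (a)_k (b)_k t-paths avoid W, where a and b count the vertices outside W
  on the two sides.\<close>
lemma card_avoiding:
  "card (avoiding n W) =
     falling (card {i. i < n \<and> Inl i \<notin> W}) k * falling (card {i. i < n \<and> Inr i \<notin> W}) k"
proof -
  let ?A = "{i. i < n \<and> Inl i \<notin> W}" and ?B = "{i. i < n \<and> Inr i \<notin> W}"
  let ?S = "{p \<in> side_lists n k. set (fst p) \<subseteq> ?A \<and> set (snd p) \<subseteq> ?B}"
  have avoids: "pverts (path_of p) \<inter> W = {} \<longleftrightarrow> set (fst p) \<subseteq> ?A \<and> set (snd p) \<subseteq> ?B"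
    if p: "p \<in> side_lists n k" for p
  proof -
    obtain ls rs where lr: "p = (ls, rs)" by fastforce
    have "pverts (path_of p) = Inl ` set ls \<union> Inr ` set rs"
      using pverts_path_of[OF _ k_pos] p lr by simp
    moreover have "set ls \<subseteq> {..<n}" "set rs \<subseteq> {..<n}" using p lr by (auto simp: side_lists_def)
    ultimately show ?thesis using lr by auto
  qed
  have "{P \<in> path_of ` side_lists n k. pverts P \<inter> W = {}}
        = path_of ` {p \<in> side_lists n k. pverts (path_of p) \<inter> W = {}}" by auto
  also have "{p \<in> side_lists n k. pverts (path_of p) \<inter> W = {}} = ?S"
    using avoids by blast
  finally have "avoiding n W = path_of ` ?S"
    unfolding avoiding_def tpaths_eq_image[OF t_eq] .
  moreover have "inj_on path_of ?S" by (rule inj_on_subset[OF inj_on_path_of[OF k_pos]]) auto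
  ultimately have "card (avoiding n W) = card ?S" by (simp add: card_image)
  also have "\<dots> = falling (card ?A) k * falling (card ?B) k" by (rule card_side_lists_within) auto
  finally show ?thesis .
qed

definition families :: "nat \<Rightarrow> nat \<Rightarrow> (nat + nat) set set set set" where
  "families n j = {F \<in> tfamilies t n. card F = j}"

lemma finite_families: "finite (families n j)"
  using finite_tfamilies by (simp add: families_def)

lemma families_0: "families n 0 = {{}}"
  using finite_family by (auto simp: families_def tfamilies_def)

lemma card_avoiding_family:
  assumes "G \<in> families n j"
  shows "card (avoiding n (covered G)) = falling (n - k * j) k ^ 2"
proof -
  have G: "G \<in> tfamilies t n" "card G = j" using assms by (auto simp: families_def)
  have "card {i. i < n \<and> f i \<notin> covered G} = n - k * j" if "f = Inl \<or> f = Inr" for f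
  proof -
    have "{i. i < n \<and> f i \<notin> covered G} = {..<n} - {i. f i \<in> covered G}" by auto
    then show ?thesis using family_side[OF G(1) that] G(2)
      by (simp add: card_Diff_subset finite_subset)
  qed
  then show ?thesis by (simp add: card_avoiding power2_eq_square)
qed

text \<open>A path avoiding a family is not a member of it (paths are nonempty).\<close>
lemma avoiding_covered_not_member:
  assumes "P \<in> avoiding n (covered G)"
  shows "P \<notin> G"
proof
  assume "P \<in> G"
  then have "pverts P \<subseteq> covered G" by (auto simp: covered_def)
  then show False using assms tpath_vertices(2)[of P n] by (auto simp: avoiding_def)
qed

lemma bij_betw_remove_path:
  "bij_betw (\<lambda>(F, P). (F - {P}, P)) (SIGMA F:families n (Suc j). F)
     (SIGMA G:families n j. avoiding n (covered G))"
proof (rule bij_betw_byWitness[where f' = "\<lambda>(G, P). (insert P G, P)"])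
  show "\<forall>x\<in>SIGMA F:families n (Suc j). F. (\<lambda>(G, P). (insert P G, P)) ((\<lambda>(F, P). (F - {P}, P)) x) = x"
    by auto
  show "\<forall>y\<in>SIGMA G:families n j. avoiding n (covered G).
          (\<lambda>(F, P). (F - {P}, P)) ((\<lambda>(G, P). (insert P G, P)) y) = y"
    using avoiding_covered_not_member by auto
  show "(\<lambda>(F, P). (F - {P}, P)) ` (SIGMA F:families n (Suc j). F)
        \<subseteq> (SIGMA G:families n j. avoiding n (covered G))"
  proof (rule image_subsetI)
    fix x assume "x \<in> (SIGMA F:families n (Suc j). F)"
    then obtain F P where x: "x = (F, P)" and F: "F \<in> tfamilies t n" "card F = Suc j"
      and P: "P \<in> F" by (auto simp: families_def)
    have "F - {P} \<in> families n j"
      using F P finite_family[OF F(1)] by (auto simp: families_def tfamilies_def)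
    moreover have "P \<in> avoiding n (covered (F - {P}))"
      using F(1) P by (auto simp: tfamilies_def avoiding_def covered_def)
    ultimately show "(\<lambda>(F, P). (F - {P}, P)) x \<in> (SIGMA G:families n j. avoiding n (covered G))"
      using x by simp
  qed
  show "(\<lambda>(G, P). (insert P G, P)) ` (SIGMA G:families n j. avoiding n (covered G))
        \<subseteq> (SIGMA F:families n (Suc j). F)"
  proof (rule image_subsetI)
    fix y assume "y \<in> (SIGMA G:families n j. avoiding n (covered G))"
    then obtain G P where y: "y = (G, P)" and G: "G \<in> tfamilies t n" "card G = j"
      and P: "P \<in> avoiding n (covered G)" by (auto simp: families_def)
    have "insert P G \<in> tfamilies t n"
      using G(1) P by (auto simp: tfamilies_def avoiding_def covered_def)
    moreover have "card (insert P G) = Suc j"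
      using G avoiding_covered_not_member[OF P] finite_family[OF G(1)] by simp
    ultimately show "(\<lambda>(G, P). (insert P G, P)) y \<in> (SIGMA F:families n (Suc j). F)"
      using y by (simp add: families_def)
  qed
qed

lemma card_families_Suc:
  "Suc j * card (families n (Suc j)) = card (families n j) * falling (n - k * j) k ^ 2"
proof -
  have "Suc j * card (families n (Suc j)) = card (SIGMA F:families n (Suc j). F)"
    by (subst card_SigmaI[OF finite_families]) (auto simp: families_def finite_family)
  also have "\<dots> = card (SIGMA G:families n j. avoiding n (covered G))"
    by (rule bij_betw_same_card[OF bij_betw_remove_path])
  also have "\<dots> = (\<Sum>G\<in>families n j. card (avoiding n (covered G)))"
    using finite_tpaths by (subst card_SigmaI[OF finite_families]) (auto simp: avoiding_def)
  also have "\<dots> = card (families n j) * falling (n - k * j) k ^ 2"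
    by (simp add: card_avoiding_family)
  finally show ?thesis .
qed

theorem card_families: "fact j * card (families n j) = falling n (k * j) ^ 2"
proof (induction j)
  case 0
  then show ?case by (simp add: families_0)
next
  case (Suc j)
  have "fact (Suc j) * card (families n (Suc j)) = fact j * (Suc j * card (families n (Suc j)))"
    by (simp add: algebra_simps)
  also have "\<dots> = (falling n (k * j) * falling (n - k * j) k) ^ 2"
    using Suc by (simp only: card_families_Suc mult.assoc[symmetric]) (simp add: power_mult_distrib)
  also have "\<dots> = falling n (k * Suc j) ^ 2"
    by (simp add: falling_add[symmetric] add.commute)
  finally show ?case .
qed

lemma card_families_eq_0: "n < k * j \<Longrightarrow> card (families n j) = 0"
  using card_families[of j n] falling_eq_0 by simp

lemma covers_iff:
  assumes "F \<in> tfamilies t n"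
  shows "(\<Union>P\<in>F. pverts P) = Kverts n \<longleftrightarrow> k * card F = n"
proof
  assume "(\<Union>P\<in>F. pverts P) = Kverts n"
  then have "{i. Inl i \<in> covered F} = {..<n}" by (auto simp: Kverts_def covered_def)
  then show "k * card F = n" using family_side(1)[OF assms, of Inl] by simp
next
  assume kF: "k * card F = n"
  have "{i. f i \<in> covered F} = {..<n}" if "f = Inl \<or> f = Inr" for f
    using family_side[OF assms that] kF by (intro card_subset_eq) auto
  then have "Kverts n \<subseteq> covered F" by (auto simp: Kverts_def)
  then show "(\<Union>P\<in>F. pverts P) = Kverts n"
    using family_vertices[OF assms] unfolding covered_def by auto
qed

lemma mu_eq_card: "mu t N = card {F \<in> tfamilies t N. k * card F = N}"
proof -
  have "{F \<in> tfamilies t N. (\<Union>P\<in>F. pverts P) = Kverts N} = {F \<in> tfamilies t N. k * card F = N}"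
    by (rule Collect_cong) (use covers_iff in blast)
  then show ?thesis by (simp add: mu_def)
qed

theorem mu_fact:
  assumes "k dvd N"
  shows "fact (N div k) * mu t N = fact N ^ 2"
proof -
  have "{F \<in> tfamilies t N. k * card F = N} = families N (N div k)"
    using assms k_pos by (auto simp: families_def)
  then show ?thesis using card_families[of "N div k" N] assms by (simp add: mu_eq_card falling_self)
qed

lemma mu_eq_0:
  assumes "\<not> k dvd N"
  shows "mu t N = 0"
proof -
  have empty: "{F \<in> tfamilies t N. k * card F = N} = {}" using assms by auto
  show ?thesis unfolding mu_eq_card empty by simp
qed

end

section \<open>The N-th finite difference of a polynomial of degree at most N\<close>

text \<open>Pascal's rule turns an alternating binomial sum of order N + 1 into one of order N
  applied to the differences g i - g (i + 1).\<close>
lemma alternating_binomial_sum_Suc: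
  fixes g :: "nat \<Rightarrow> int"
  shows "(\<Sum>j\<le>Suc N. (-1)^j * int (Suc N choose j) * g j) =
         (\<Sum>i\<le>N. (-1)^i * int (N choose i) * (g i - g (Suc i)))"
proof -
  have shifted: "(\<Sum>i\<le>N. (-1)^i * int (N choose i) * (- g (Suc i))) =
           (\<Sum>j\<le>Suc N. (-1)^j * int (if j = 0 then 0 else N choose (j - 1)) * g j)"
    by (subst sum.atMost_Suc_shift) simp
  have "(\<Sum>i\<le>N. (-1)^i * int (N choose i) * (g i - g (Suc i))) =
        (\<Sum>j\<le>Suc N. (-1)^j * int (N choose j) * g j) +
        (\<Sum>i\<le>N. (-1)^i * int (N choose i) * (- g (Suc i)))"
    by (simp add: sum.distrib[symmetric] algebra_simps)
  also have "\<dots> = (\<Sum>j\<le>Suc N. (-1)^j * int (N choose j) * g j +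
                        (-1)^j * int (if j = 0 then 0 else N choose (j - 1)) * g j)"
    unfolding shifted by (simp add: sum.distrib)
  also have "\<dots> = (\<Sum>j\<le>Suc N. (-1)^j * int (Suc N choose j) * g j)"
  proof (rule sum.cong[OF refl])
    fix j show "(-1)^j * int (N choose j) * g j +
                (-1)^j * int (if j = 0 then 0 else N choose (j - 1)) * g j =
                (-1)^j * int (Suc N choose j) * g j"
      by (cases j) (simp_all add: algebra_simps)
  qed
  finally show ?thesis by simp
qed

definition forward_diff :: "int poly \<Rightarrow> int poly" where
  "forward_diff p = pcompose p [:1, 1:] - p"

lemma poly_forward_diff: "poly (forward_diff p) x = poly p (x + 1) - poly p x"
  by (simp add: forward_diff_def poly_pcompose algebra_simps)

lemma forward_diff_pCons: "forward_diff (pCons a q) = forward_diff q + pCons 0 (forward_diff q) + q"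
  by (simp add: forward_diff_def pcompose_pCons algebra_simps)

lemma forward_diff_const: "degree q = 0 \<Longrightarrow> forward_diff q = 0"
  by (metis forward_diff_def degree_eq_zeroE pcompose_const diff_self)

lemma forward_diff_degree:
  "degree p \<le> Suc N \<Longrightarrow>
   degree (forward_diff p) \<le> N \<and> coeff (forward_diff p) N = of_nat (Suc N) * coeff p (Suc N)"
proof (induction N arbitrary: p)
  case 0
  obtain a q where p: "p = pCons a q" by (cases p)
  have "degree q = 0" using 0 p by (cases "q = 0") auto
  then show ?case using p by (simp add: forward_diff_pCons forward_diff_const)
next
  case (Suc N)
  obtain a q where p: "p = pCons a q" by (cases p)
  have dq: "degree q \<le> Suc N" using Suc.prems p by (cases "q = 0") auto
  from Suc.IH[OF dq] have ih: "degree (forward_diff q) \<le> N"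
    "coeff (forward_diff q) N = of_nat (Suc N) * coeff q (Suc N)" by auto
  have eq: "forward_diff p = forward_diff q + pCons 0 (forward_diff q) + q"
    using p by (simp add: forward_diff_pCons)
  have "degree (pCons 0 (forward_diff q)) \<le> Suc N" using ih by (cases "forward_diff q = 0") auto
  then have "degree (forward_diff p) \<le> Suc N" unfolding eq using ih dq
    by (intro degree_add_le) auto
  moreover have "coeff (forward_diff q) (Suc N) = 0" using ih by (simp add: coeff_eq_0)
  then have "coeff (forward_diff p) (Suc N) = of_nat (Suc (Suc N)) * coeff p (Suc (Suc N))"
    unfolding eq using ih p by (simp add: algebra_simps)
  ultimately show ?case by simp
qed

theorem alternating_binomial_sum_poly:
  "degree p \<le> N \<Longrightarrow>
   (\<Sum>j\<le>N. (-1)^j * int (N choose j) * poly p (int j)) = (-1)^N * fact N * coeff p N"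
proof (induction N arbitrary: p)
  case 0
  then show ?case by (simp add: poly_0_coeff_0)
next
  case (Suc N)
  have diff: "degree (forward_diff p) \<le> N"
    "coeff (forward_diff p) N = of_nat (Suc N) * coeff p (Suc N)"
    using forward_diff_degree[OF Suc.prems] by auto
  have "(\<Sum>j\<le>Suc N. (-1)^j * int (Suc N choose j) * poly p (int j)) =
        - (\<Sum>i\<le>N. (-1)^i * int (N choose i) * poly (forward_diff p) (int i))"
    unfolding alternating_binomial_sum_Suc poly_forward_diff
    by (simp add: sum_negf[symmetric] algebra_simps)
  also have "\<dots> = (-1)^Suc N * fact (Suc N) * coeff p (Suc N)"
    using Suc.IH[OF diff(1)] diff(2) by (simp add: algebra_simps)
  finally show ?case .
qed

lemma LL_eq_sum: "degree p \<le> D \<Longrightarrow> LL t p = (\<Sum>i\<le>D. coeff p i * int (mu t i))"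
  unfolding LL_def by (rule sum.mono_neutral_left) (auto simp: coeff_eq_0)

lemma LL_add: "LL t (p + q) = LL t p + LL t q"
proof -
  define D where "D = max (degree p) (degree q)"
  have "degree (p + q) \<le> D" unfolding D_def by (rule degree_add_le) auto
  then show ?thesis
    using LL_eq_sum[of p D t] LL_eq_sum[of q D t] LL_eq_sum[of "p + q" D t]
    by (simp add: D_def sum.distrib algebra_simps)
qed

lemma LL_sum: "finite S \<Longrightarrow> LL t (\<Sum>j\<in>S. f j) = (\<Sum>j\<in>S. LL t (f j))"
proof (induction S rule: finite_induct)
  case empty
  show ?case by (simp add: LL_def)
next
  case (insert x S)
  then show ?case by (simp add: LL_add)
qed

lemma LL_monom: "LL t (monom c e) = c * int (mu t e)"
proof -
  have "LL t (monom c e) = (\<Sum>i\<le>e. coeff (monom c e) i * int (mu t i))"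
    by (rule LL_eq_sum) (simp add: degree_monom_le)
  also have "\<dots> = (\<Sum>i\<le>e. (if i = e then c * int (mu t i) else 0))"
    by (rule sum.cong) (auto simp: coeff_monom)
  finally show ?thesis by simp
qed

definition weight_poly :: "nat \<Rightarrow> nat \<Rightarrow> nat \<Rightarrow> int poly" where
  "weight_poly m r k = (\<Prod>s<r. [:int m + int s + 1, - int k:]) ^ 2"

lemma poly_weight_poly: "poly (weight_poly m r k) x = (\<Prod>s<r. int m + int s + 1 - int k * x) ^ 2"
  by (simp add: weight_poly_def poly_prod algebra_simps)

lemma weight_poly_root:
  assumes "m < k * j" "k * j \<le> m + r"
  shows "poly (weight_poly m r k) (int j) = 0"
proof -
  have "k * j - m - 1 < r" and "int m + int (k * j - m - 1) + 1 - int k * int j = 0"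
    using assms by auto
  then have "(\<Prod>s<r. int m + int s + 1 - int k * int j) = 0" by (intro prod_zero) auto
  then show ?thesis by (simp add: poly_weight_poly)
qed

lemma weight_poly_degree_coeff:
  assumes "k \<ge> 1"
  shows "degree (weight_poly m r k) = 2 * r" "coeff (weight_poly m r k) (2 * r) = int k ^ (2 * r)"
proof -
  let ?q = "\<Prod>s<r. [:int m + int s + 1, - int k:]"
  have "degree ?q = r"
    using degree_prod_eq_sum_degree[of "{..<r}" "\<lambda>s. [:int m + int s + 1, - int k:]"] assms by simp
  moreover have lq: "lead_coeff ?q = (- int k) ^ r" using assms by (simp add: lead_coeff_prod)
  moreover have "?q \<noteq> 0" using lq assms by auto
  ultimately show deg: "degree (weight_poly m r k) = 2 * r"
    unfolding weight_poly_def by (simp add: degree_power_eq)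
  have "lead_coeff (weight_poly m r k) = ((- int k) ^ r) ^ 2"
    unfolding weight_poly_def using lq by (simp add: lead_coeff_power)
  then show "coeff (weight_poly m r k) (2 * r) = int k ^ (2 * r)"
    unfolding deg by (simp add: power_mult_distrib power_mult[symmetric] mult.commute)
qed

lemma fact_add_prod: "fact (x + r) = fact x * (\<Prod>s<r. x + s + 1)"
  by (induction r) (simp_all add: algebra_simps)

section \<open>The functional on products of the polynomials L_m\<close>

context odd_path_length
begin

lemma card_family_le:
  assumes "F \<in> tfamilies t m"
  shows "card F \<le> m"
proof -
  have "k * card F \<le> m"
    using family_side[OF assms, of Inl] card_mono[of "{..<m}" "{i. Inl i \<in> covered F}"] by simp
  moreover have "card F \<le> k * card F" using k_pos by simp
  ultimately show ?thesis by linarith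
qed

lemma neg_one_power_mult_poly: "(- 1 :: int poly) ^ c * q = smult ((-1) ^ c) q"
  by (induction c) (auto simp: algebra_simps)

lemma Lpoly_expand: "Lpoly t m = (\<Sum>j\<le>m. monom ((-1)^j * int (card (families m j))) (m - k * j))"
proof -
  have k_eq: "(t + 1) div 2 = k" using t_eq by simp
  have "Lpoly t m = (\<Sum>F\<in>tfamilies t m. monom ((-1) ^ card F) (m - k * card F))"
    unfolding Lpoly_def k_eq by (intro sum.cong refl) (simp add: neg_one_power_mult_poly monom_altdef)
  also have "\<dots> = (\<Sum>j\<le>m. \<Sum>F\<in>families m j. monom ((-1) ^ card F) (m - k * card F))"
    unfolding families_def
    by (rule sum.group[symmetric]) (auto simp: finite_tfamilies card_family_le)
  also have "\<dots> = (\<Sum>j\<le>m. monom ((-1)^j * int (card (families m j))) (m - k * j))"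
  proof (rule sum.cong[OF refl])
    fix j
    have "(\<Sum>F\<in>families m j. monom ((-1) ^ card F) (m - k * card F))
          = (\<Sum>F\<in>families m j. monom ((-1) ^ j) (m - k * j))"
      by (intro sum.cong) (auto simp: families_def)
    also have "\<dots> = monom ((-1)^j * int (card (families m j))) (m - k * j)"
      by (simp add: of_nat_mult_conv_smult smult_monom mult.commute)
    finally show "(\<Sum>F\<in>families m j. monom ((-1) ^ card F) (m - k * card F))
               = monom ((-1)^j * int (card (families m j))) (m - k * j)" .
  qed
  finally show ?thesis .
qed

text \<open>The value of the functional on x^r L_m (see the next lemma).\<close>
definition moment :: "nat \<Rightarrow> nat \<Rightarrow> int" where
  "moment r m = (\<Sum>j\<le>m. (-1)^j * int (card (families m j)) * int (mu t (r + (m - k * j))))"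

lemma LL_monom_mult_Lpoly: "LL t (monom a r * Lpoly t m) = a * moment r m"
proof -
  have "monom a r * Lpoly t m =
        (\<Sum>j\<le>m. monom (a * ((-1)^j * int (card (families m j)))) (r + (m - k * j)))"
    unfolding Lpoly_expand by (simp add: sum_distrib_left mult_monom)
  then show ?thesis
    by (simp add: LL_sum LL_monom moment_def sum_distrib_left algebra_simps)
qed

lemma LL_Lpoly_mult:
  "LL t (Lpoly t m * Lpoly t n) =
     (\<Sum>j\<le>n. (-1)^j * int (card (families n j)) * moment (n - k * j) m)"
proof -
  have "Lpoly t m * Lpoly t n =
        (\<Sum>j\<le>n. monom ((-1)^j * int (card (families n j))) (n - k * j) * Lpoly t m)"
    by (subst (2) Lpoly_expand) (simp add: sum_distrib_left mult.commute)
  then show ?thesis by (simp add: LL_sum LL_monom_mult_Lpoly)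
qed

lemma moment_summand_nat:
  assumes kN: "k * N = r + m" and j: "k * j \<le> m"
  shows "fact N * (card (families m j) * mu t (r + (m - k * j))) =
         (N choose j) * (fact m * (\<Prod>s<r. m - k * j + s + 1)) ^ 2"
proof -
  have "k * j \<le> k * N" using j kN by simp
  then have jN: "j \<le> N" using k_pos by simp
  have "r + (m - k * j) = k * (N - j)" using kN j by (simp add: diff_mult_distrib2)
  then have mu: "fact (N - j) * mu t (r + (m - k * j)) = fact (r + (m - k * j)) ^ 2"
    using mu_fact[of "r + (m - k * j)"] k_pos by simp
  have fam: "fact j * card (families m j) = falling m (k * j) ^ 2" by (rule card_families)
  have rising: "falling m (k * j) * fact (r + (m - k * j)) = fact m * (\<Prod>s<r. m - k * j + s + 1)"
    using fact_add_prod[of "m - k * j" r] falling_mult_fact[OF j] by (simp add: add.commute)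
  have "fact N * (card (families m j) * mu t (r + (m - k * j))) =
        (N choose j) * ((fact j * card (families m j)) * (fact (N - j) * mu t (r + (m - k * j))))"
    using binomial_fact_lemma[OF jN] by (simp add: algebra_simps)
  also have "\<dots> = (N choose j) * (falling m (k * j) * fact (r + (m - k * j))) ^ 2"
    unfolding fam mu by (simp add: power_mult_distrib)
  finally show ?thesis unfolding rising .
qed

lemma moment_summand:
  assumes kN: "k * N = r + m"
  shows "int (fact N) * ((-1)^j * int (card (families m j)) * int (mu t (r + (m - k * j)))) =
         int (fact m) ^ 2 * ((-1)^j * int (N choose j) * poly (weight_poly m r k) (int j))"
proof (cases "k * j \<le> m")
  case True
  have "int (\<Prod>s<r. m - k * j + s + 1) = (\<Prod>s<r. int m + int s + 1 - int k * int j)"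
    using True by (simp add: of_nat_diff) (intro prod.cong refl, simp)
  then show ?thesis
    using arg_cong[OF moment_summand_nat[OF kN True], of int]
    by (simp add: poly_weight_poly power_mult_distrib algebra_simps)
next
  case False
  have "(N choose j) * poly (weight_poly m r k) (int j) = 0"
  proof (cases "j \<le> N")
    case True
    then have "k * j \<le> k * N" by simp
    then have "k * j \<le> m + r" using kN by simp
    then show ?thesis using False weight_poly_root by simp
  qed simp
  then show ?thesis using False card_families_eq_0 by simp
qed

lemma moment_finite_difference:
  assumes kN: "k * N = r + m"
  shows "int (fact N) * moment r m =
         int (fact m) ^ 2 * (\<Sum>j\<le>N. (-1)^j * int (N choose j) * poly (weight_poly m r k) (int j))"
proof -
  have "int (fact N) * moment r m =
        (\<Sum>j\<le>m + N. int (fact N) * ((-1)^j * int (card (families m j)) * int (mu t (r + (m - k * j)))))"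
    unfolding moment_def sum_distrib_left
  proof (rule sum.mono_neutral_left)
    show "\<forall>j\<in>{..m + N} - {..m}.
            int (fact N) * ((-1)^j * int (card (families m j)) * int (mu t (r + (m - k * j)))) = 0"
    proof
      fix j assume "j \<in> {..m + N} - {..m}"
      then have "m < j" by simp
      moreover have "j \<le> k * j" using k_pos by simp
      ultimately have "m < k * j" by linarith
      then show "int (fact N) * ((-1)^j * int (card (families m j)) * int (mu t (r + (m - k * j)))) = 0"
        using card_families_eq_0 by simp
    qed
  qed auto
  also have "\<dots> = (\<Sum>j\<le>m + N. int (fact m) ^ 2 *
                     ((-1)^j * int (N choose j) * poly (weight_poly m r k) (int j)))"
    by (intro sum.cong refl moment_summand[OF kN])
  also have "\<dots> = int (fact m) ^ 2 *
                  (\<Sum>j\<le>N. (-1)^j * int (N choose j) * poly (weight_poly m r k) (int j))"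
    unfolding sum_distrib_left by (rule sum.mono_neutral_right) auto
  finally show ?thesis .
qed

lemma k_times_double: "k * (2 * r) = r + r * t"
proof -
  have "r * Suc t = r * (2 * k)" by (simp only: t_eq)
  then show ?thesis by (simp add: algebra_simps)
qed

text \<open>Hence the moment vanishes when the weight polynomial has degree 2r < N \<dots>\<close>
lemma moment_vanishes:
  assumes "r * t < m"
  shows "moment r m = 0"
proof (cases "k dvd (r + m)")
  case False
  have vanish: "card (families m j) * mu t (r + (m - k * j)) = 0" for j
  proof (cases "k * j \<le> m")
    case True
    have "\<not> k dvd (r + (m - k * j))"
    proof
      assume "k dvd (r + (m - k * j))"
      then have "k dvd (r + (m - k * j) + k * j)" by simp
      then show False using False True by simp
    qed
    then show ?thesis using mu_eq_0 by simp
  qed (simp add: card_families_eq_0)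
  show ?thesis unfolding moment_def mult.assoc of_nat_mult[symmetric] vanish by simp
next
  case True
  then obtain N where kN: "k * N = r + m" by (metis dvdE)
  then have "k * (2 * r) < k * N" using k_times_double[of r] assms by linarith
  then have "2 * r < N" by simp
  then have "(\<Sum>j\<le>N. (-1)^j * int (N choose j) * poly (weight_poly m r k) (int j)) = 0"
    using alternating_binomial_sum_poly[of "weight_poly m r k" N]
      weight_poly_degree_coeff(1)[OF k_pos] by (simp add: coeff_eq_0)
  then show ?thesis using moment_finite_difference[OF kN] by simp
qed

text \<open>\<dots> while for m = rt it picks out the leading coefficient k^(2r).\<close>
lemma moment_diagonal: "moment r (r * t) = int (fact (r * t)) ^ 2 * int k ^ (2 * r)"
proof -
  have "(\<Sum>j\<le>2 * r. (-1)^j * int (2 * r choose j) * poly (weight_poly (r * t) r k) (int j))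
        = int (fact (2 * r)) * int k ^ (2 * r)"
    using alternating_binomial_sum_poly[of "weight_poly (r * t) r k" "2 * r"]
      weight_poly_degree_coeff[OF k_pos] by simp
  then have "int (fact (2 * r)) * moment r (r * t) =
             int (fact (2 * r)) * (int (fact (r * t)) ^ 2 * int k ^ (2 * r))"
    using moment_finite_difference[OF k_times_double] by (simp add: algebra_simps)
  then show ?thesis by simp
qed

text \<open>Orthogonality: only moments of x^r L_m with rt \<le> nt < m occur.\<close>
theorem LL_Lpoly_orthogonal:
  assumes "n * t < m"
  shows "LL t (Lpoly t m * Lpoly t n) = 0"
proof -
  have "(n - k * j) * t < m" for j
    using assms by (meson diff_le_self le_less_trans mult_le_mono1)
  then show ?thesis unfolding LL_Lpoly_mult by (simp add: moment_vanishes)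
qed

text \<open>The norm: for m = nt only the empty family (j = 0) contributes.\<close>
theorem LL_Lpoly_norm: "LL t (Lpoly t (n * t) * Lpoly t n) = int (fact (n * t)) ^ 2 * int k ^ (2 * n)"
proof -
  have "moment (n - k * j) (n * t) = 0" if "j \<in> {..n} - {0}" "k * j \<le> n" for j
  proof (rule moment_vanishes)
    have "n - k * j < n" using that k_pos by (simp add: Suc_le_eq)
    moreover have "t \<ge> 1" using t_eq k_pos by (cases t) auto
    ultimately show "(n - k * j) * t < n * t" by simp
  qed
  then have "(\<Sum>j\<in>{..n} - {0}. (-1)^j * int (card (families n j)) * moment (n - k * j) (n * t)) = 0"
    using card_families_eq_0 by (intro sum.neutral) (metis mult_eq_0_iff not_le of_nat_0)
  then have "LL t (Lpoly t (n * t) * Lpoly t n) = moment n (n * t)"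
    unfolding LL_Lpoly_mult by (simp add: sum.remove[of "{..n}" 0] families_0)
  then show ?thesis by (simp add: moment_diagonal)
qed

end

lemma choose_middle_fact: "Suc t = 2 * k \<Longrightarrow> (t choose k) * fact k ^ 2 = fact t * k"
proof -
  assume tk: "Suc t = 2 * k"
  then have "fact k * fact (t - k) * (t choose k) = fact t" by (intro binomial_fact_lemma) simp
  moreover have "fact k = k * fact (t - k)" using tk fact_reduce[of k] by (cases k) simp_all
  ultimately show ?thesis by (simp add: power2_eq_square algebra_simps)
qed

lemma prod_choose_mult: "(\<Prod>i<n. ((n - i) * t choose t)) * fact t ^ n = fact (n * t)"
proof (induction n)
  case (Suc n)
  have "(\<Prod>i<Suc n. ((Suc n - i) * t choose t)) =
        (Suc n * t choose t) * (\<Prod>i<n. ((n - i) * t choose t))"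
    by (subst prod.lessThan_Suc_shift) simp
  moreover have "fact t * fact (n * t + t - t) * (n * t + t choose t) = fact (n * t + t)"
    by (rule binomial_fact_lemma) simp
  ultimately show ?case using Suc by (simp add: algebra_simps)
qed simp

lemma norm_product:
  assumes "Suc t = 2 * k"
  shows "(\<Prod>i<n. (int (((n - i) * t choose t) * (t choose k) * (fact k) ^ 2)) ^ 2) =
         int (fact (n * t)) ^ 2 * int k ^ (2 * n)"
proof -
  have "(\<Prod>i<n. ((n - i) * t choose t) * (t choose k) * (fact k) ^ 2) =
        (\<Prod>i<n. ((n - i) * t choose t)) * fact t ^ n * k ^ n"
    using choose_middle_fact[OF assms] by (simp add: mult.assoc prod.distrib power_mult_distrib)
  also have "\<dots> = fact (n * t) * k ^ n" by (simp add: prod_choose_mult)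
  finally have nat_eq: "(\<Prod>i<n. ((n - i) * t choose t) * (t choose k) * (fact k) ^ 2) =
                        fact (n * t) * k ^ n" .
  have "(\<Prod>i<n. (int (((n - i) * t choose t) * (t choose k) * (fact k) ^ 2)) ^ 2) =
        (int (\<Prod>i<n. ((n - i) * t choose t) * (t choose k) * (fact k) ^ 2)) ^ 2"
    by (simp add: prod_power_distrib)
  also have "\<dots> = int (fact (n * t)) ^ 2 * int k ^ (2 * n)"
    unfolding nat_eq by (simp add: power_mult_distrib power_mult mult.commute)
  finally show ?thesis .
qed

theorem mainTheorem17:
  fixes t :: nat
  assumes "odd t"
  defines "k \<equiv> (t + 1) div 2"
  shows "(\<forall>n m. m > n * t \<longrightarrow> LL t (Lpoly t m * Lpoly t n) = 0) \<and>
         (\<forall>n. LL t (Lpoly t (n * t) * Lpoly t n) =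
               (\<Prod>i<n. (int (((n - i) * t choose t) * (t choose k) * (fact k) ^ 2)) ^ 2))"
proof -
  have tk: "Suc t = 2 * k" using assms(1) unfolding k_def by (auto elim: oddE)
  interpret odd_path_length t k by unfold_locales (rule tk)
  show ?thesis
    using LL_Lpoly_orthogonal LL_Lpoly_norm norm_product[OF tk] by simp
qed
end
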